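(* Let $|\psi\rangle,|\phi\rangle\in\mathcal{H}'$ be pure states, with $p_b=|\langle b|\psi\rangle|^2$ and $q_b=|\langle b|\phi\rangle|^2$ for $b\in\{0,1\}$. There exists a deterministic (trace-preserving) Z$_2$-invariant operation $\mathcal{E}$ with $\mathcal{E}(|\psi\rangle\langle\psi|)=|\phi\rangle\langle\phi|$ if and only if $\mathcal{C}(|\psi\rangle)\ge\mathcal{C}(|\phi\rangle)$, where $\mathcal{C}(|\psi\rangle)=2\min\{p_0,p_1\}$ and $\mathcal{C}(|\phi\rangle)=2\min\{q_0,q_1\}$.
   Context: $\mathcal{H}'$ is a two-dimensional Hilbert space with orthonormal basis $|0\rangle,|1\rangle$; the parity operator is $\pi=|0\rangle\langle0|-|1\rangle\langle1|$, and Z$_2$ acts by $\{I,\pi\}$. A Z$_2$-invariant operation is a completely positive, trace-nonincreasing linear map $\mathcal{E}$ on operators on $\mathcal{H}'$ with $\mathcal{E}(\pi X\pi)=\pi\mathcal{E}(X)\pi$ for all $X$; it is deterministic if trace-preserving. *)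

theory Defs
  imports Complex_Main
begin

text \<open>The qubit H' = C^2 with orthonormal basis |0>, |1>; we index the basis by bool,
  False standing for |0> and True for |1>. Operators on H' are 2x2 complex matrices
  X :: bool => bool => complex (X i j = <i|X|j>).\<close>

type_synonym qop = "bool \<Rightarrow> bool \<Rightarrow> complex"
type_synonym qket = "bool \<Rightarrow> complex"

definition qtrace :: "qop \<Rightarrow> complex" where
  "qtrace X = X False False + X True True"

text \<open>Positive semidefinite operator on H' tensor C^k: block matrix indexed by (b,m), m < k.\<close>
definition psd_ext :: "nat \<Rightarrow> (bool \<Rightarrow> nat \<Rightarrow> bool \<Rightarrow> nat \<Rightarrow> complex) \<Rightarrow> bool" where
  "psd_ext k Z \<longleftrightarrow> (\<forall>v :: bool \<Rightarrow> nat \<Rightarrow> complex.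
     (let q = (\<Sum>b\<in>UNIV. \<Sum>m<k. \<Sum>b'\<in>UNIV. \<Sum>m'<k. cnj (v b m) * Z b m b' m' * v b' m')
      in Im q = 0 \<and> Re q \<ge> 0))"

definition psd :: "qop \<Rightarrow> bool" where
  "psd X \<longleftrightarrow> (\<forall>v :: qket.
     (let q = (\<Sum>b\<in>UNIV. \<Sum>b'\<in>UNIV. cnj (v b) * X b b' * v b')
      in Im q = 0 \<and> Re q \<ge> 0))"

definition linear_qmap :: "(qop \<Rightarrow> qop) \<Rightarrow> bool" where
  "linear_qmap E \<longleftrightarrow> (\<forall>a X Y. E (\<lambda>i j. a * X i j + Y i j) = (\<lambda>i j. a * E X i j + E Y i j))"

text \<open>(E tensor id_k) applied to an operator on H' tensor C^k.\<close>
definition ext_map :: "(qop \<Rightarrow> qop) \<Rightarrow> (bool \<Rightarrow> nat \<Rightarrow> bool \<Rightarrow> nat \<Rightarrow> complex)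
    \<Rightarrow> (bool \<Rightarrow> nat \<Rightarrow> bool \<Rightarrow> nat \<Rightarrow> complex)" where
  "ext_map E Z = (\<lambda>b m b' m'. E (\<lambda>c c'. Z c m c' m') b b')"

definition completely_positive :: "(qop \<Rightarrow> qop) \<Rightarrow> bool" where
  "completely_positive E \<longleftrightarrow> (\<forall>k Z. psd_ext k Z \<longrightarrow> psd_ext k (ext_map E Z))"

definition trace_nonincreasing :: "(qop \<Rightarrow> qop) \<Rightarrow> bool" where
  "trace_nonincreasing E \<longleftrightarrow> (\<forall>X. psd X \<longrightarrow> Re (qtrace (E X)) \<le> Re (qtrace X))"

definition trace_preserving :: "(qop \<Rightarrow> qop) \<Rightarrow> bool" where
  "trace_preserving E \<longleftrightarrow> (\<forall>X. qtrace (E X) = qtrace X)"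

text \<open>Parity operator pi = |0><0| - |1><1|; conjugation pi X pi.\<close>
definition parity_sign :: "bool \<Rightarrow> complex" where
  "parity_sign b = (if b then -1 else 1)"

definition parity_conj :: "qop \<Rightarrow> qop" where
  "parity_conj X = (\<lambda>i j. parity_sign i * X i j * parity_sign j)"

definition Z2_invariant_operation :: "(qop \<Rightarrow> qop) \<Rightarrow> bool" where
  "Z2_invariant_operation E \<longleftrightarrow> linear_qmap E \<and> completely_positive E \<and> trace_nonincreasing E
     \<and> (\<forall>X. E (parity_conj X) = parity_conj (E X))"

definition deterministic_Z2_invariant_operation :: "(qop \<Rightarrow> qop) \<Rightarrow> bool" where
  "deterministic_Z2_invariant_operation E \<longleftrightarrow> Z2_invariant_operation E \<and> trace_preserving E"

definition pure_state :: "qket \<Rightarrow> bool" where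
  "pure_state \<psi> \<longleftrightarrow> (cmod (\<psi> False))\<^sup>2 + (cmod (\<psi> True))\<^sup>2 = 1"

definition proj :: "qket \<Rightarrow> qop" where
  "proj \<psi> = (\<lambda>i j. \<psi> i * cnj (\<psi> j))"

definition pop :: "qket \<Rightarrow> bool \<Rightarrow> real" where
  "pop \<psi> b = (cmod (\<psi> b))\<^sup>2"

definition coherence :: "qket \<Rightarrow> real" where
  "coherence \<psi> = 2 * min (pop \<psi> False) (pop \<psi> True)"

end

theory Submission
  imports Defs
begin

(* A Z2-covariant map E commutes with taking the off-diagonal part X - pi X pi, so the
   off-diagonal entry of E X only depends on that of X.  Rescaling the off-diagonal part of X
   into that of a pure state of trace one, positivity and the trace bound of its image give
   |(E X)_01| <= |X_01|.  For pure states this reads |phi_0 phi_1| <= |psi_0 psi_1|, i.e.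
   q_0 q_1 <= p_0 p_1, and since p_0 p_1 = m (1 - m) with m = min p_0 p_1 <= 1/2 this is
   C(phi) <= C(psi).
   Conversely, C(phi) <= C(psi) puts p_0 between q_0 and q_1, say p_0 = L q_0 + (1 - L) q_1.
   The Kraus operators sqrt L diag(phi_b / psi_b) and sqrt (1 - L) antidiag(phi_b / psi_(1-b))
   are diagonal resp. antidiagonal, hence parity covariant, form a complete family, and map psi
   to sqrt L phi and sqrt (1 - L) phi. *)

definition apply_op :: "qop \<Rightarrow> qket \<Rightarrow> qket" where
  "apply_op K \<psi> = (\<lambda>i. \<Sum>c\<in>UNIV. K i c * \<psi> c)"

definition sandwich :: "qop \<Rightarrow> qop \<Rightarrow> qop" where
  "sandwich K X = (\<lambda>i j. \<Sum>c\<in>UNIV. \<Sum>c'\<in>UNIV. K i c * X c c' * cnj (K j c'))"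

definition kraus_map :: "('k::finite \<Rightarrow> qop) \<Rightarrow> qop \<Rightarrow> qop" where
  "kraus_map K X = (\<lambda>i j. \<Sum>k\<in>UNIV. sandwich (K k) X i j)"

definition kraus_complete :: "('k::finite \<Rightarrow> qop) \<Rightarrow> bool" where
  "kraus_complete K \<longleftrightarrow>
     (\<forall>c c'. (\<Sum>k\<in>UNIV. \<Sum>b\<in>UNIV. K k b c * cnj (K k b c')) = (if c = c' then 1 else 0))"

definition parity_homogeneous :: "qop \<Rightarrow> bool" where
  "parity_homogeneous K \<longleftrightarrow>
     (K True False = 0 \<and> K False True = 0) \<or> (K False False = 0 \<and> K True True = 0)"

lemma linear_qmap_kraus_map: "linear_qmap (kraus_map K)"
  unfolding linear_qmap_def kraus_map_def sandwich_def
  by (simp add: UNIV_bool algebra_simps sum.distrib sum_distrib_left)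

lemma sandwich_parity_conj:
  "parity_homogeneous K \<Longrightarrow> sandwich K (parity_conj X) = parity_conj (sandwich K X)"
  unfolding parity_homogeneous_def sandwich_def parity_conj_def parity_sign_def
  by (auto simp: fun_eq_iff UNIV_bool algebra_simps split: bool.split)

lemma kraus_map_parity_conj:
  "(\<And>k. parity_homogeneous (K k)) \<Longrightarrow> kraus_map K (parity_conj X) = parity_conj (kraus_map K X)"
  unfolding kraus_map_def by (simp add: sandwich_parity_conj) (simp add: parity_conj_def
    sum_distrib_left sum_distrib_right)

lemma trace_preserving_kraus_map:
  assumes "kraus_complete K"
  shows "trace_preserving (kraus_map K)"
  unfolding trace_preserving_def
proof
  fix X
  have "qtrace (kraus_map K X)
      = (\<Sum>c\<in>UNIV. \<Sum>c'\<in>UNIV. X c c' * (\<Sum>k\<in>UNIV. \<Sum>b\<in>UNIV. K k b c * cnj (K k b c')))"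
    by (simp add: qtrace_def kraus_map_def sandwich_def UNIV_bool algebra_simps
        sum.distrib sum_distrib_left)
  also have "\<dots> = qtrace X"
    using assms by (simp add: kraus_complete_def qtrace_def UNIV_bool)
  finally show "qtrace (kraus_map K X) = qtrace X" .
qed

lemma sandwich_proj: "sandwich K (proj \<psi>) = proj (apply_op K \<psi>)"
  unfolding sandwich_def proj_def apply_op_def by (auto simp: UNIV_bool algebra_simps fun_eq_iff)

lemma quadratic_form_sandwich:
  "(\<Sum>b\<in>UNIV. \<Sum>b'\<in>UNIV. cnj (x b) * sandwich K Y b b' * y b')
   = (\<Sum>c\<in>UNIV. \<Sum>c'\<in>UNIV.
        cnj (\<Sum>b\<in>UNIV. cnj (K b c) * x b) * Y c c' * (\<Sum>b'\<in>UNIV. cnj (K b' c') * y b'))"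
  by (simp add: sandwich_def UNIV_bool algebra_simps)

lemma psd_ext_sandwich:
  assumes "psd_ext k Z"
  shows "psd_ext k (\<lambda>b m b' m'. sandwich K (\<lambda>c c'. Z c m c' m') b b')"
  unfolding psd_ext_def
proof
  fix v :: "bool \<Rightarrow> nat \<Rightarrow> complex"
  define w where "w = (\<lambda>c m. \<Sum>b\<in>UNIV. cnj (K b c) * v b m)"
  have "(\<Sum>b\<in>UNIV. \<Sum>m<k. \<Sum>b'\<in>UNIV. \<Sum>m'<k.
          cnj (v b m) * sandwich K (\<lambda>c c'. Z c m c' m') b b' * v b' m')
      = (\<Sum>m<k. \<Sum>m'<k. \<Sum>b\<in>UNIV. \<Sum>b'\<in>UNIV.
          cnj (v b m) * sandwich K (\<lambda>c c'. Z c m c' m') b b' * v b' m')"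
    by (simp add: UNIV_bool sum.distrib)
  also have "\<dots> = (\<Sum>m<k. \<Sum>m'<k. \<Sum>b\<in>UNIV. \<Sum>b'\<in>UNIV. cnj (w b m) * Z b m b' m' * w b' m')"
    by (simp only: w_def quadratic_form_sandwich)
  also have "\<dots> = (\<Sum>b\<in>UNIV. \<Sum>m<k. \<Sum>b'\<in>UNIV. \<Sum>m'<k. cnj (w b m) * Z b m b' m' * w b' m')"
    by (simp add: UNIV_bool sum.distrib)
  finally show "let q = \<Sum>b\<in>UNIV. \<Sum>m<k. \<Sum>b'\<in>UNIV. \<Sum>m'<k.
                  cnj (v b m) * sandwich K (\<lambda>c c'. Z c m c' m') b b' * v b' m'
                in Im q = 0 \<and> 0 \<le> Re q"
    using assms unfolding psd_ext_def by (metis (no_types, lifting))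
qed

lemma psd_ext_add:
  assumes "psd_ext k A" "psd_ext k B"
  shows "psd_ext k (\<lambda>b m b' m'. A b m b' m' + B b m b' m')"
  using assms unfolding psd_ext_def Let_def
  by (simp add: distrib_left distrib_right sum.distrib)

lemma psd_ext_sum:
  assumes "finite S" "\<And>s. s \<in> S \<Longrightarrow> psd_ext k (Z s)"
  shows "psd_ext k (\<lambda>b m b' m'. \<Sum>s\<in>S. Z s b m b' m')"
  using assms
proof (induction S rule: finite_induct)
  case empty
  then show ?case by (simp add: psd_ext_def)
next
  case (insert s S)
  then show ?case by (simp add: psd_ext_add)
qed

lemma completely_positive_kraus_map: "completely_positive (kraus_map K)"
  unfolding completely_positive_def ext_map_def kraus_map_def
  by (intro allI impI psd_ext_sum) (simp_all add: psd_ext_sandwich)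

lemma deterministic_Z2_invariant_kraus_map:
  assumes "kraus_complete K" "\<And>k. parity_homogeneous (K k)"
  shows "deterministic_Z2_invariant_operation (kraus_map K)"
  using trace_preserving_kraus_map[OF assms(1)] kraus_map_parity_conj[OF assms(2)]
    linear_qmap_kraus_map completely_positive_kraus_map
  unfolding deterministic_Z2_invariant_operation_def Z2_invariant_operation_def
    trace_nonincreasing_def trace_preserving_def
  by auto

lemma kraus_map_proj:
  assumes "\<And>k. apply_op (K k) \<psi> = (\<lambda>i. a k * \<phi> i)" "(\<Sum>k\<in>UNIV. a k * cnj (a k)) = 1"
  shows "kraus_map K (proj \<psi>) = proj \<phi>"
proof -
  have "kraus_map K (proj \<psi>) i j = (\<Sum>k\<in>UNIV. a k * cnj (a k)) * proj \<phi> i j" for i j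
    unfolding kraus_map_def sandwich_proj assms(1)
    by (simp add: proj_def sum_distrib_left sum_distrib_right mult_ac)
  then show ?thesis
    by (simp add: assms(2) fun_eq_iff)
qed

lemma psd_ext_1_iff: "psd_ext 1 (\<lambda>b m b' m'. X b b') \<longleftrightarrow> psd X"
  unfolding psd_ext_def psd_def
  apply (simp add: lessThan_Suc)
  apply (rule iffI)
   apply (intro allI)
  subgoal for v by (drule spec[where x="\<lambda>b m. v b"]) simp
  apply (intro allI)
  subgoal for v by (drule spec[where x="\<lambda>b. v b 0"]) simp
  done

lemma completely_positive_imp_psd:
  assumes "completely_positive E" "psd X"
  shows "psd (E X)"
proof -
  have "psd_ext 1 (ext_map E (\<lambda>b m b' m'. X b b'))"
    using assms psd_ext_1_iff[of X] unfolding completely_positive_def by blast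
  then show ?thesis
    unfolding ext_map_def psd_ext_1_iff .
qed

lemma psd_proj: "psd (proj \<chi>)"
  unfolding psd_def Let_def
proof
  fix v :: qket
  define z where "z = (\<Sum>b\<in>UNIV. cnj (v b) * \<chi> b)"
  have "(\<Sum>b\<in>UNIV. \<Sum>b'\<in>UNIV. cnj (v b) * proj \<chi> b b' * v b') = z * cnj z"
    by (simp add: z_def proj_def UNIV_bool algebra_simps)
  then show "Im (\<Sum>b\<in>UNIV. \<Sum>b'\<in>UNIV. cnj (v b) * proj \<chi> b b' * v b') = 0 \<and>
    0 \<le> Re (\<Sum>b\<in>UNIV. \<Sum>b'\<in>UNIV. cnj (v b) * proj \<chi> b b' * v b')"
    by (simp add: complex_mult_cnj)
qed

lemma qtrace_proj: "qtrace (proj \<chi>) = of_real ((cmod (\<chi> False))\<^sup>2 + (cmod (\<chi> True))\<^sup>2)"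
  unfolding qtrace_def proj_def of_real_add complex_norm_square ..

lemma psd_quadratic_form:
  "psd X \<Longrightarrow> Im (\<Sum>b\<in>UNIV. \<Sum>b'\<in>UNIV. cnj (v b) * X b b' * v b') = 0
    \<and> 0 \<le> Re (\<Sum>b\<in>UNIV. \<Sum>b'\<in>UNIV. cnj (v b) * X b b' * v b')"
  unfolding psd_def Let_def by blast

lemma psd_hermitian:
  assumes "psd X"
  shows "X True False = cnj (X False True)"
proof -
  have "Im (X False False) = 0" "Im (X True True) = 0"
    "Im (X False False + X False True + X True False + X True True) = 0"
    "Im (X False False + \<i> * X False True - \<i> * X True False + X True True) = 0"
    using psd_quadratic_form[OF assms, of "\<lambda>b. if b then 0 else 1"]
      psd_quadratic_form[OF assms, of "\<lambda>b. if b then 1 else 0"]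
      psd_quadratic_form[OF assms, of "\<lambda>b. 1"]
      psd_quadratic_form[OF assms, of "\<lambda>b. if b then \<i> else 1"]
    by (simp_all add: UNIV_bool algebra_simps)
  then show ?thesis
    by (simp add: complex_eq_iff)
qed

lemma psd_off_diagonal_le_trace:
  assumes "psd X"
  shows "2 * cmod (X False True) \<le> Re (qtrace X)"
proof -
  define z where "z = X False True"
  define u where "u = (if z = 0 then 1 else - cnj z / of_real (cmod z))"
  have zz: "z * cnj z = of_real (cmod z) * of_real (cmod z)"
    by (metis complex_norm_square of_real_mult power2_eq_square)
  then have zu: "z * u = - of_real (cmod z)"
    by (simp add: u_def)
  have uu: "cnj u * u = 1"
    using zz by (auto simp: u_def field_simps)
  have "(\<Sum>b\<in>UNIV. \<Sum>b'\<in>UNIV. cnj ((\<lambda>b. if b then u else 1) b) * X b b'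
          * (\<lambda>b. if b then u else 1) b')
      = qtrace X + z * u + cnj (z * u)"
    using psd_hermitian[OF assms] uu
    by (simp add: UNIV_bool qtrace_def z_def algebra_simps)
  also have "\<dots> = qtrace X - 2 * of_real (cmod z)"
    by (simp add: zu)
  finally show ?thesis
    using psd_quadratic_form[OF assms, of "\<lambda>b. if b then u else 1"] by (simp add: z_def)
qed

lemma linear_qmap_zero:
  assumes "linear_qmap E"
  shows "E (\<lambda>i j. 0) = (\<lambda>i j. 0)"
proof -
  have "E (\<lambda>i j. 1 * 0 + 0) = (\<lambda>i j. 1 * E (\<lambda>i j. 0) i j + E (\<lambda>i j. 0) i j)"
    using assms[unfolded linear_qmap_def, rule_format, of 1 "\<lambda>i j. 0" "\<lambda>i j. 0"] by simp
  then show ?thesis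
    by (simp add: fun_eq_iff)
qed

lemma linear_qmap_scale:
  assumes "linear_qmap E"
  shows "E (\<lambda>i j. a * X i j) = (\<lambda>i j. a * E X i j)"
  using assms[unfolded linear_qmap_def, rule_format, of a X "\<lambda>i j. 0"]
  by (simp add: linear_qmap_zero[OF assms])

lemma Z2_covariant_off_diagonal:
  assumes lin: "linear_qmap E" and cov: "\<And>X. E (parity_conj X) = parity_conj (E X)"
    and "X False True = X' False True" "X True False = X' True False"
  shows "E X False True = E X' False True"
proof -
  define odd_part :: "qop \<Rightarrow> qop" where
    "odd_part Y = (\<lambda>i j. (-1) * parity_conj Y i j + Y i j)" for Y
  have E_odd_part: "E (odd_part Y) False True = 2 * E Y False True" for Y
  proof -
    have "E (odd_part Y) = (\<lambda>i j. (-1) * E (parity_conj Y) i j + E Y i j)"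
      unfolding odd_part_def using lin linear_qmap_def by blast
    then show ?thesis
      by (simp only: cov) (simp add: parity_conj_def parity_sign_def)
  qed
  have "odd_part X = odd_part X'"
    using assms(3,4)
    by (auto simp: fun_eq_iff odd_part_def parity_conj_def parity_sign_def split: bool.split)
  then show ?thesis
    using E_odd_part[of X] E_odd_part[of X'] by simp
qed

lemma Z2_invariant_operation_off_diagonal_le:
  assumes E: "Z2_invariant_operation E" and herm: "X True False = cnj (X False True)"
  shows "cmod (E X False True) \<le> cmod (X False True)"
proof -
  have lin: "linear_qmap E" and cov: "\<And>X. E (parity_conj X) = parity_conj (E X)"
    and cp: "completely_positive E" and tni: "trace_nonincreasing E"
    using E unfolding Z2_invariant_operation_def by blast+
  define z where "z = X False True"
  show ?thesis
  proof (cases "z = 0")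
    case True
    have "E X False True = E (\<lambda>i j. 0) False True"
      by (rule Z2_covariant_off_diagonal[of E X "\<lambda>i j. 0", OF lin cov])
        (simp_all add: herm True[unfolded z_def])
    then show ?thesis
      by (simp add: linear_qmap_zero[OF lin])
  next
    case False
    define r where "r = cmod z"
    have r: "r > 0" using False by (simp add: r_def)
    \<comment> \<open>a pure state whose off-diagonal part is that of X scaled by 1/(2 r)\<close>
    define \<chi> :: qket where
      "\<chi> = (\<lambda>b. if b then cnj z / of_real (r * sqrt 2) else of_real (1 / sqrt 2))"
    have s2: "of_real (sqrt 2) * of_real (sqrt 2) = (2::complex)"
      by (simp flip: of_real_mult)
    have "E (proj \<chi>) False True = E (\<lambda>i j. of_real (1 / (2 * r)) * X i j) False True"
      using s2 r
      by (intro Z2_covariant_off_diagonal[of E "proj \<chi>" "\<lambda>i j. of_real (1 / (2 * r)) * X i j",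
            OF lin cov])
        (simp_all add: proj_def \<chi>_def herm z_def field_simps)
    then have off: "E (proj \<chi>) False True = of_real (1 / (2 * r)) * E X False True"
      by (simp only: linear_qmap_scale[OF lin])
    have "Re (qtrace (E (proj \<chi>))) \<le> Re (qtrace (proj \<chi>))"
      using tni psd_proj unfolding trace_nonincreasing_def by blast
    also have "\<dots> = 1"
      using r by (simp add: qtrace_proj \<chi>_def norm_divide norm_mult power_divide
          power_mult_distrib r_def)
    finally have "2 * cmod (E (proj \<chi>) False True) \<le> 1"
      using psd_off_diagonal_le_trace[OF completely_positive_imp_psd[OF cp psd_proj[of \<chi>]]]
      by linarith
    then have "cmod (E X False True) / r \<le> 1"
      using r unfolding off by (simp add: norm_mult norm_divide)
    then show ?thesis
      using r by (simp add: divide_le_eq_1_pos r_def z_def)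
  qed
qed

lemma min_le_min_if_mult_le:
  fixes p0 p1 q0 q1 :: real
  assumes "p0 + p1 = 1" "q0 + q1 = 1" "q0 * q1 \<le> p0 * p1"
  shows "min q0 q1 \<le> min p0 p1"
proof (rule ccontr)
  define m where "m = min p0 p1"
  define n where "n = min q0 q1"
  have p1: "p1 = 1 - p0" and q1: "q1 = 1 - q0"
    using assms(1,2) by simp_all
  have m: "m * (1 - m) = p0 * p1" "m \<le> 1/2" and n: "n * (1 - n) = q0 * q1" "n \<le> 1/2"
    by (simp_all add: m_def n_def min_def algebra_simps p1 q1)
  assume "\<not> min q0 q1 \<le> min p0 p1"
  then have "m < n"
    unfolding m_def n_def by linarith
  then have "0 < (n - m) * (1 - n - m)"
    using m(2) n(2) by (intro mult_pos_pos) auto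
  then show False
    using m(1) n(1) assms(3) by (simp add: algebra_simps)
qed

lemma convex_combination_if_min_le_min:
  fixes p0 p1 q0 q1 :: real
  assumes "p0 + p1 = 1" "q0 + q1 = 1" "min q0 q1 \<le> min p0 p1"
  obtains L where "0 \<le> L" "L \<le> 1" "p0 = L * q0 + (1 - L) * q1"
proof (cases "q0 = q1")
  case True
  then show ?thesis
    using assms by (intro that[of 1]) (auto simp: min_def split: if_splits)
next
  case False
  define t where "t = (p0 - q1) / (q0 - q1)"
  have "t * (q0 - q1) = p0 - q1"
    using False by (simp add: t_def)
  then have "p0 = t * q0 + (1 - t) * q1"
    by (simp add: algebra_simps)
  moreover have "0 \<le> t" "t \<le> 1"
    using assms False by (auto simp: t_def min_def divide_simps split: if_splits)
  ultimately show ?thesis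
    using that by blast
qed

lemma pure_state_cnj_sum: "pure_state \<phi> \<Longrightarrow> \<phi> False * cnj (\<phi> False) + \<phi> True * cnj (\<phi> True) = 1"
  unfolding pure_state_def complex_norm_square[symmetric] by (metis of_real_1 of_real_add)

lemma pop_sum: "pure_state \<psi> \<Longrightarrow> pop \<psi> False + pop \<psi> True = 1"
  by (simp add: pure_state_def pop_def)

lemma pop_mult_eq_off_diagonal: "pop \<psi> False * pop \<psi> True = (cmod (proj \<psi> False True))\<^sup>2"
  by (simp add: pop_def proj_def norm_mult power_mult_distrib)

text \<open>Measure in the parity basis and prepare \<phi>; this is covariant only because \<phi> has a
  definite parity.\<close>

lemma deterministic_Z2_transform_to_basis_state:
  assumes "pure_state \<psi>" "pure_state \<phi>" "\<phi> False = 0 \<or> \<phi> True = 0"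
  shows "\<exists>E. deterministic_Z2_invariant_operation E \<and> E (proj \<psi>) = proj \<phi>"
proof -
  define K :: "bool \<Rightarrow> qop" where "K b = (\<lambda>i c. if c = b then \<phi> i else 0)" for b
  have "kraus_complete K"
    using pure_state_cnj_sum[OF assms(2)]
    by (auto simp: kraus_complete_def K_def UNIV_bool)
  moreover have "parity_homogeneous (K b)" for b
    using assms(3) by (auto simp: parity_homogeneous_def K_def)
  moreover have "kraus_map K (proj \<psi>) = proj \<phi>"
    by (rule kraus_map_proj[where a = \<psi>])
      (auto simp: apply_op_def K_def UNIV_bool pure_state_cnj_sum[OF assms(1)])
  ultimately show ?thesis
    using deterministic_Z2_invariant_kraus_map by blast
qed

definition interpolation_weight :: "real \<Rightarrow> bool \<Rightarrow> complex" where
  "interpolation_weight L b = of_real (sqrt (if b then 1 - L else L))"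

definition interpolating_kraus :: "real \<Rightarrow> qket \<Rightarrow> qket \<Rightarrow> bool \<Rightarrow> qop" where
  "interpolating_kraus L \<psi> \<phi> b =
     (\<lambda>i c. if (i = c) \<noteq> b then interpolation_weight L b * \<phi> i / \<psi> c else 0)"

lemma interpolation_weight_cnj:
  assumes "0 \<le> L" "L \<le> 1"
  shows "interpolation_weight L b * cnj (interpolation_weight L b) = of_real (if b then 1 - L else L)"
  using assms by (simp add: interpolation_weight_def flip: of_real_mult)

lemma parity_homogeneous_interpolating_kraus: "parity_homogeneous (interpolating_kraus L \<psi> \<phi> b)"
  by (auto simp: parity_homogeneous_def interpolating_kraus_def)

lemma apply_op_interpolating_kraus:
  assumes "\<psi> False \<noteq> 0" "\<psi> True \<noteq> 0"
  shows "apply_op (interpolating_kraus L \<psi> \<phi> b) \<psi> = (\<lambda>i. interpolation_weight L b * \<phi> i)"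
  using assms by (auto simp: apply_op_def interpolating_kraus_def UNIV_bool fun_eq_iff)

lemma kraus_complete_interpolating_kraus:
  assumes "\<psi> False \<noteq> 0" "\<psi> True \<noteq> 0" "0 \<le> L" "L \<le> 1"
    and "\<And>c. pop \<psi> c = L * pop \<phi> c + (1 - L) * pop \<phi> (\<not> c)"
  shows "kraus_complete (interpolating_kraus L \<psi> \<phi>)"
  unfolding kraus_complete_def
proof (intro allI)
  fix c c' :: bool
  let ?K = "interpolating_kraus L \<psi> \<phi>" and ?a = "interpolation_weight L"
  show "(\<Sum>k\<in>UNIV. \<Sum>b\<in>UNIV. ?K k b c * cnj (?K k b c')) = (if c = c' then 1 else 0)"
  proof (cases "c = c'")
    case True
    have "(\<Sum>k\<in>UNIV. \<Sum>b\<in>UNIV. ?K k b c * cnj (?K k b c))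
        = (?a False * cnj (?a False) * (\<phi> c * cnj (\<phi> c))
           + ?a True * cnj (?a True) * (\<phi> (\<not> c) * cnj (\<phi> (\<not> c)))) / (\<psi> c * cnj (\<psi> c))"
      using assms(1,2) by (cases c) (simp_all add: interpolating_kraus_def UNIV_bool field_simps)
    also have "\<dots> = of_real ((L * pop \<phi> c + (1 - L) * pop \<phi> (\<not> c)) / pop \<psi> c)"
      unfolding interpolation_weight_cnj[OF assms(3,4)]
      by (simp only: pop_def complex_norm_square[symmetric]) simp
    also have "\<dots> = 1"
    proof -
      have "pop \<psi> c \<noteq> 0"
        using assms(1,2) by (cases c) (simp_all add: pop_def)
      then show ?thesis
        by (simp add: assms(5)[symmetric])
    qed
    finally show ?thesis
      using True by simp
  qed (auto simp: interpolating_kraus_def UNIV_bool)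
qed

lemma deterministic_Z2_transform_interpolating:
  assumes "pure_state \<psi>" "pure_state \<phi>" "\<psi> False \<noteq> 0" "\<psi> True \<noteq> 0"
    and L: "0 \<le> L" "L \<le> 1" "pop \<psi> False = L * pop \<phi> False + (1 - L) * pop \<phi> True"
  shows "\<exists>E. deterministic_Z2_invariant_operation E \<and> E (proj \<psi>) = proj \<phi>"
proof -
  have "pop \<psi> c = L * pop \<phi> c + (1 - L) * pop \<phi> (\<not> c)" for c
    using assms(1,2) L(3) by (cases c) (auto simp: pure_state_def pop_def algebra_simps)
  then have "kraus_complete (interpolating_kraus L \<psi> \<phi>)"
    by (rule kraus_complete_interpolating_kraus[OF assms(3,4) L(1,2)])
  moreover have "kraus_map (interpolating_kraus L \<psi> \<phi>) (proj \<psi>) = proj \<phi>"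
    using assms(3,4) L(1,2)
    by (intro kraus_map_proj[where a = "interpolation_weight L"])
      (simp_all add: apply_op_interpolating_kraus UNIV_bool interpolation_weight_cnj)
  ultimately show ?thesis
    using deterministic_Z2_invariant_kraus_map parity_homogeneous_interpolating_kraus by blast
qed

theorem theorem10:
  fixes \<psi> \<phi> :: qket
  assumes "pure_state \<psi>" and "pure_state \<phi>"
  shows "(\<exists>E. deterministic_Z2_invariant_operation E \<and> E (proj \<psi>) = proj \<phi>)
         \<longleftrightarrow> coherence \<psi> \<ge> coherence \<phi>"
proof
  assume "\<exists>E. deterministic_Z2_invariant_operation E \<and> E (proj \<psi>) = proj \<phi>"
  then obtain E where "Z2_invariant_operation E" "E (proj \<psi>) = proj \<phi>"
    unfolding deterministic_Z2_invariant_operation_def by blast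
  then have "cmod (proj \<phi> False True) \<le> cmod (proj \<psi> False True)"
    using Z2_invariant_operation_off_diagonal_le[of E "proj \<psi>"] by (simp add: proj_def)
  then have "pop \<phi> False * pop \<phi> True \<le> pop \<psi> False * pop \<psi> True"
    unfolding pop_mult_eq_off_diagonal by (simp add: power_mono)
  with pop_sum[OF assms(1)] pop_sum[OF assms(2)]
  have "min (pop \<phi> False) (pop \<phi> True) \<le> min (pop \<psi> False) (pop \<psi> True)"
    by (rule min_le_min_if_mult_le)
  then show "coherence \<psi> \<ge> coherence \<phi>"
    by (simp add: coherence_def)
next
  assume "coherence \<psi> \<ge> coherence \<phi>"
  then have le: "min (pop \<phi> False) (pop \<phi> True) \<le> min (pop \<psi> False) (pop \<psi> True)"
    by (simp add: coherence_def)
  show "\<exists>E. deterministic_Z2_invariant_operation E \<and> E (proj \<psi>) = proj \<phi>"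
  proof (cases "\<phi> False = 0 \<or> \<phi> True = 0")
    case True
    then show ?thesis
      using deterministic_Z2_transform_to_basis_state assms by blast
  next
    case False
    then have "\<psi> False \<noteq> 0" "\<psi> True \<noteq> 0"
      using le by (auto simp: pop_def min_def split: if_splits)
    moreover obtain L where "0 \<le> L" "L \<le> 1"
      "pop \<psi> False = L * pop \<phi> False + (1 - L) * pop \<phi> True"
      using convex_combination_if_min_le_min[OF pop_sum pop_sum le] assms by blast
    ultimately show ?thesis
      using deterministic_Z2_transform_interpolating assms by blast
  qed
qed

end
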